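(* Let $M\ge1$, $\ell\ge1$, $1\le m\le\ell$, and let $\lambda_1,\dots,\lambda_m$ be positive integers with $\lambda_1+\dots+\lambda_m=\ell$. For $k=(k_1,\dots,k_\ell)\in\mathbb{Z}^\ell$ define the block sums $K_j=\sum_{l=\lambda_1+\dots+\lambda_{j-1}+1}^{\lambda_1+\dots+\lambda_j}k_l$ for $j=1,\dots,m$. Let $\epsilon_1,\dots,\epsilon_m\in\{\pm1\}$ with $\prod_{j=1}^m\epsilon_j=-1$. Let $\mathcal N$ be the number of $(n_1,\dots,n_m)\in\mathbb{Z}^m$ with $-M\le n_j\le M$ for all $j$ and $n_j-\epsilon_{j-1}n_{j-1}=-K_j$ for $j=1,\dots,m$, where indices are taken cyclically modulo $m$ (so $n_0=n_m$, $\epsilon_0=\epsilon_m$). Then $\mathcal N\in\{0,1\}$. Moreover, if $\sum_{l=1}^\ell k_l$ is odd then $\mathcal N=0$, and if $\sum_{l=1}^\ell k_l$ is even and $\sum_{l=1}^\ell|k_l|\le 2M$ then $\mathcal N=1$. *)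

theory Defs
  imports Main
begin

definition block_end :: "(nat \<Rightarrow> nat) \<Rightarrow> nat \<Rightarrow> nat" where
  "block_end lam j = (\<Sum>i=1..j. lam i)"

definition block_sum :: "(nat \<Rightarrow> nat) \<Rightarrow> (nat \<Rightarrow> int) \<Rightarrow> nat \<Rightarrow> int" where
  "block_sum lam k j = (\<Sum>l = block_end lam (j - 1) + 1 .. block_end lam j. k l)"

definition cyc_prev :: "nat \<Rightarrow> nat \<Rightarrow> nat" where
  "cyc_prev m j = (if j = 1 then m else j - 1)"

definition sol_set :: "int \<Rightarrow> nat \<Rightarrow> (nat \<Rightarrow> nat) \<Rightarrow> (nat \<Rightarrow> int) \<Rightarrow> (nat \<Rightarrow> int) \<Rightarrow> (nat \<Rightarrow> int) set" where
  "sol_set M m lam eps k =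
     {n. (\<forall>j. j \<notin> {1..m} \<longrightarrow> n j = 0) \<and>
         (\<forall>j\<in>{1..m}. - M \<le> n j \<and> n j \<le> M \<and>
             n j - eps (cyc_prev m j) * n (cyc_prev m j) = - block_sum lam k j)}"

end

theory Submission imports Defs begin

text \<open>
  With the cumulative signs \<open>s\<^sub>j = \<epsilon>\<^sub>1\<cdots>\<epsilon>\<^sub>j\<^sub>-\<^sub>1\<close>, the difference of two solutions satisfies
  \<open>d\<^sub>j = s\<^sub>j d\<^sub>1\<close> and, closing the cycle, \<open>d\<^sub>1 = (\<Prod>\<epsilon>\<^sub>j) d\<^sub>1 = -d\<^sub>1\<close>; so there is at most one
  solution. Summing the equations gives \<open>-\<Sum>K\<^sub>j = \<Sum>(1 - \<epsilon>\<^sub>j) n\<^sub>j\<close>, which is even. Conversely,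
  in the variables \<open>u\<^sub>j = s\<^sub>j n\<^sub>j\<close> the system becomes \<open>u\<^sub>j = u\<^sub>j\<^sub>-\<^sub>1 - s\<^sub>j K\<^sub>j\<close> with the twisted
  closing condition \<open>u\<^sub>1 + u\<^sub>m = -K\<^sub>1\<close>, solved by \<open>u\<^sub>j = T/2 - A\<^sub>j\<close> where \<open>A\<^sub>j = \<Sum>\<^sub>i\<^sub>\<le>\<^sub>j s\<^sub>i K\<^sub>i\<close> and
  \<open>T = A\<^sub>m \<equiv> \<Sum>K\<^sub>j (mod 2)\<close>; since \<open>T - 2A\<^sub>j = \<Sum>\<^sub>i\<^sub>>\<^sub>j s\<^sub>i K\<^sub>i - \<Sum>\<^sub>i\<^sub>\<le>\<^sub>j s\<^sub>i K\<^sub>i\<close>, we get \<open>2|n\<^sub>j| \<le> \<Sum>|K\<^sub>i| \<le> \<Sum>|k\<^sub>l|\<close>.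
\<close>

lemma sum_blocks:
  "(\<Sum>j=1..m. \<Sum>l = block_end lam (j - 1) + 1 .. block_end lam j. f l) =
   (\<Sum>l=1..block_end lam m. f l :: 'a :: comm_monoid_add)"
proof (induction m)
  case 0
  then show ?case by (simp add: block_end_def)
next
  case (Suc m)
  have "block_end lam (Suc m) = block_end lam m + lam (Suc m)"
    by (simp add: block_end_def)
  moreover have "(\<Sum>l=1..block_end lam m + lam (Suc m). f l) =
      (\<Sum>l=1..block_end lam m. f l) + (\<Sum>l=block_end lam m + 1..block_end lam m + lam (Suc m). f l)"
    by (rule sum.ub_add_nat) simp
  ultimately show ?case using Suc by simp
qed

lemma sum_block_sum: "(\<Sum>j=1..m. block_sum lam k j) = (\<Sum>l=1..block_end lam m. k l)"
  unfolding block_sum_def by (rule sum_blocks)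

lemma sum_abs_block_sum_le:
  "(\<Sum>j=1..m. \<bar>block_sum lam k j\<bar>) \<le> (\<Sum>l=1..block_end lam m. \<bar>k l\<bar>)"
proof -
  have "(\<Sum>j=1..m. \<bar>block_sum lam k j\<bar>) \<le>
      (\<Sum>j=1..m. \<Sum>l = block_end lam (j - 1) + 1 .. block_end lam j. \<bar>k l\<bar>)"
    unfolding block_sum_def by (intro sum_mono sum_abs)
  then show ?thesis by (simp only: sum_blocks)
qed

lemma bij_betw_cyc_prev: "bij_betw (cyc_prev m) {1..m} {1..m}"
proof (rule bij_betw_imageI)
  show "inj_on (cyc_prev m) {1..m}"
    by (auto simp: inj_on_def cyc_prev_def split: if_splits)
  have surj: "j \<in> cyc_prev m ` {1..m}" if "j \<in> {1..m}" for j
  proof (cases "j = m")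
    case True
    then show ?thesis using that by (intro image_eqI[of _ _ 1]) (auto simp: cyc_prev_def)
  next
    case False
    then show ?thesis using that by (intro image_eqI[of _ _ "Suc j"]) (auto simp: cyc_prev_def)
  qed
  moreover have "cyc_prev m ` {1..m} \<subseteq> {1..m}"
    by (auto simp: cyc_prev_def)
  ultimately show "cyc_prev m ` {1..m} = {1..m}"
    by blast
qed

lemma sum_cyc_prev: "(\<Sum>j=1..m. f (cyc_prev m j)) = (\<Sum>j=1..m. f j)"
  using sum.reindex_bij_betw[OF bij_betw_cyc_prev] .

definition cyclic_recurrence :: "nat \<Rightarrow> (nat \<Rightarrow> int) \<Rightarrow> (nat \<Rightarrow> int) \<Rightarrow> (nat \<Rightarrow> int) \<Rightarrow> bool" where
  "cyclic_recurrence m eps K n \<longleftrightarrow>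
     (\<forall>j\<in>{1..m}. n j - eps (cyc_prev m j) * n (cyc_prev m j) = - K j)"

lemma mem_sol_set_iff:
  "n \<in> sol_set M m lam eps k \<longleftrightarrow>
     (\<forall>j. j \<notin> {1..m} \<longrightarrow> n j = 0) \<and> (\<forall>j\<in>{1..m}. \<bar>n j\<bar> \<le> M) \<and>
     cyclic_recurrence m eps (block_sum lam k) n"
  by (auto simp: sol_set_def cyclic_recurrence_def abs_le_iff)

definition prefix_prod :: "(nat \<Rightarrow> int) \<Rightarrow> nat \<Rightarrow> int" where
  "prefix_prod eps j = (\<Prod>i=1..<j. eps i)"

lemma prefix_prod_Suc_0 [simp]: "prefix_prod eps (Suc 0) = 1"
  by (simp add: prefix_prod_def)

lemma prefix_prod_Suc: "1 \<le> j \<Longrightarrow> prefix_prod eps (Suc j) = eps j * prefix_prod eps j"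
  by (simp add: prefix_prod_def prod.atLeastLessThan_Suc mult.commute)

lemma prefix_prod_Suc_eq_prod: "prefix_prod eps (Suc m) = (\<Prod>j=1..m. eps j)"
  by (simp add: prefix_prod_def atLeastLessThanSuc_atLeastAtMost)

lemma prefix_prod_cycle: "1 \<le> m \<Longrightarrow> eps m * prefix_prod eps m = (\<Prod>j=1..m. eps j)"
  by (metis prefix_prod_Suc prefix_prod_Suc_eq_prod)

lemma prefix_prod_sign:
  assumes "\<forall>j\<in>{1..m}. eps j = 1 \<or> eps j = -1" and "j \<le> Suc m"
  shows "prefix_prod eps j = 1 \<or> prefix_prod eps j = -1"
  using assms(2)
proof (induction j)
  case (Suc j)
  show ?case
  proof (cases "j = 0")
    case False
    then have "eps j = 1 \<or> eps j = -1" using assms(1) Suc.prems by simp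
    then show ?thesis using Suc False by (auto simp: prefix_prod_Suc)
  qed simp
qed (simp add: prefix_prod_def)

lemma homogeneous_cyclic_recurrence_eq:
  assumes "cyclic_recurrence m eps (\<lambda>_. 0) d" and "1 \<le> j" and "j \<le> m"
  shows "d j = prefix_prod eps j * d 1"
  using assms(2,3)
proof (induction j rule: dec_induct)
  case (step i)
  have "d (Suc i) = eps i * d i"
    using assms(1) step by (auto simp: cyclic_recurrence_def cyc_prev_def)
  then show ?case using step by (simp add: prefix_prod_Suc)
qed (simp add: prefix_prod_def)

lemma cyclic_recurrence_unique:
  assumes "(\<Prod>j=1..m. eps j) \<noteq> 1"
    and "cyclic_recurrence m eps K a" and "cyclic_recurrence m eps K b" and "j \<in> {1..m}"
  shows "a j = b j"
proof -
  define d where "d i = a i - b i" for i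
  have d: "cyclic_recurrence m eps (\<lambda>_. 0) d"
    unfolding cyclic_recurrence_def
  proof
    fix i assume "i \<in> {1..m}"
    then have "a i - eps (cyc_prev m i) * a (cyc_prev m i) = b i - eps (cyc_prev m i) * b (cyc_prev m i)"
      using assms(2,3) by (simp add: cyclic_recurrence_def)
    then show "d i - eps (cyc_prev m i) * d (cyc_prev m i) = - 0"
      by (simp add: d_def algebra_simps)
  qed
  have "m \<ge> 1" using assms(4) by simp
  have "d 1 = eps m * d m"
    using d \<open>m \<ge> 1\<close> by (auto simp: cyclic_recurrence_def cyc_prev_def)
  also have "\<dots> = (eps m * prefix_prod eps m) * d 1"
    using homogeneous_cyclic_recurrence_eq[OF d \<open>m \<ge> 1\<close> order.refl] by simp
  also have "\<dots> = (\<Prod>j=1..m. eps j) * d 1"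
    using prefix_prod_cycle[OF \<open>m \<ge> 1\<close>] by simp
  finally have "d 1 = 0"
    using assms(1) by (metis mult_cancel_right2)
  then show ?thesis
    using homogeneous_cyclic_recurrence_eq[OF d] assms(4) by (simp add: d_def)
qed

lemma cyclic_recurrence_sum_even:
  assumes "\<forall>j\<in>{1..m}. odd (eps j)" and "cyclic_recurrence m eps K n"
  shows "even (\<Sum>j=1..m. K j)"
proof -
  have "(\<Sum>j=1..m. - K j) = (\<Sum>j=1..m. n j - eps (cyc_prev m j) * n (cyc_prev m j))"
    using assms(2) by (simp add: cyclic_recurrence_def)
  also have "\<dots> = (\<Sum>j=1..m. n j) - (\<Sum>j=1..m. eps j * n j)"
    using sum_cyc_prev[of "\<lambda>j. eps j * n j" m] by (simp add: sum_subtractf)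
  also have "\<dots> = (\<Sum>j=1..m. (1 - eps j) * n j)"
    by (simp add: sum_subtractf algebra_simps)
  finally have "(\<Sum>j=1..m. - K j) = (\<Sum>j=1..m. (1 - eps j) * n j)" .
  moreover have "even (\<Sum>j=1..m. (1 - eps j) * n j)"
    using assms(1) by (intro dvd_sum) simp
  ultimately show ?thesis by (metis sum_negf even_minus)
qed

definition twisted_sum :: "(nat \<Rightarrow> int) \<Rightarrow> (nat \<Rightarrow> int) \<Rightarrow> nat \<Rightarrow> int" where
  "twisted_sum eps K j = (\<Sum>i=1..j. prefix_prod eps i * K i)"

definition cyclic_witness :: "nat \<Rightarrow> (nat \<Rightarrow> int) \<Rightarrow> (nat \<Rightarrow> int) \<Rightarrow> nat \<Rightarrow> int" where
  "cyclic_witness m eps K j =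
     (if j \<in> {1..m} then prefix_prod eps j * (twisted_sum eps K m div 2 - twisted_sum eps K j) else 0)"

lemma even_twisted_sum_iff:
  assumes "\<forall>j\<in>{1..m}. eps j = 1 \<or> eps j = -1"
  shows "even (twisted_sum eps K m) \<longleftrightarrow> even (\<Sum>j=1..m. K j)"
proof -
  have "twisted_sum eps K m = (\<Sum>j=1..m. K j) + (\<Sum>j=1..m. (prefix_prod eps j - 1) * K j)"
    by (simp add: twisted_sum_def sum.distrib[symmetric] algebra_simps)
  moreover have "even (\<Sum>j=1..m. (prefix_prod eps j - 1) * K j)"
  proof (intro dvd_sum)
    fix j assume "j \<in> {1..m}"
    then have "prefix_prod eps j = 1 \<or> prefix_prod eps j = -1"
      using prefix_prod_sign[OF assms, of j] by simp
    then show "even ((prefix_prod eps j - 1) * K j)" by auto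
  qed
  ultimately show ?thesis by simp
qed

lemma cyclic_witness_bound:
  assumes "\<forall>j\<in>{1..m}. eps j = 1 \<or> eps j = -1" and "even (twisted_sum eps K m)"
  shows "2 * \<bar>cyclic_witness m eps K j\<bar> \<le> (\<Sum>i=1..m. \<bar>K i\<bar>)"
proof (cases "j \<in> {1..m}")
  case True
  have abs_sign: "\<bar>prefix_prod eps i\<bar> = 1" if "i \<le> Suc m" for i
    using prefix_prod_sign[OF assms(1) that] by auto
  obtain p where p: "m = j + p" using True by (metis atLeastAtMost_iff le_Suc_ex)
  have split: "twisted_sum eps K m = twisted_sum eps K j + (\<Sum>i=j+1..j+p. prefix_prod eps i * K i)"
    unfolding twisted_sum_def p by (rule sum.ub_add_nat) (use True in simp)
  have "2 * \<bar>cyclic_witness m eps K j\<bar> = 2 * \<bar>twisted_sum eps K m div 2 - twisted_sum eps K j\<bar>"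
    using True by (simp add: cyclic_witness_def abs_mult abs_sign)
  also have "\<dots> = \<bar>twisted_sum eps K m - 2 * twisted_sum eps K j\<bar>"
    using assms(2) by (elim evenE)
      (metis abs_mult abs_numeral nonzero_mult_div_cancel_left right_diff_distrib zero_neq_numeral)
  also have "\<dots> = \<bar>(\<Sum>i=j+1..j+p. prefix_prod eps i * K i) - twisted_sum eps K j\<bar>"
    using split by simp
  also have "\<dots> \<le> (\<Sum>i=j+1..j+p. \<bar>prefix_prod eps i * K i\<bar>) + (\<Sum>i=1..j. \<bar>prefix_prod eps i * K i\<bar>)"
    unfolding twisted_sum_def by (intro order.trans[OF abs_triangle_ineq4] add_mono sum_abs)
  also have "\<dots> = (\<Sum>i=1..m. \<bar>prefix_prod eps i * K i\<bar>)"
    unfolding p using True by (subst sum.ub_add_nat[of 1 j]) auto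
  also have "\<dots> = (\<Sum>i=1..m. \<bar>K i\<bar>)"
    by (intro sum.cong refl) (simp add: abs_mult abs_sign)
  finally show ?thesis .
qed (auto simp: cyclic_witness_def intro: sum_nonneg)

lemma cyclic_witness_solves:
  assumes "\<forall>j\<in>{1..m}. eps j = 1 \<or> eps j = -1" and "(\<Prod>j=1..m. eps j) = -1"
    and "even (twisted_sum eps K m)"
  shows "cyclic_recurrence m eps K (cyclic_witness m eps K)"
  unfolding cyclic_recurrence_def
proof
  fix j assume j: "j \<in> {1..m}"
  let ?n = "cyclic_witness m eps K" and ?s = "prefix_prod eps" and ?A = "twisted_sum eps K"
  show "?n j - eps (cyc_prev m j) * ?n (cyc_prev m j) = - K j"
  proof (cases "j = 1")
    case True
    have "eps m * ?s m = -1"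
      using assms(2) j prefix_prod_cycle[of m eps] by simp
    then have "eps m * ?n m = ?A m - ?A m div 2"
      using j by (simp add: cyclic_witness_def mult.assoc[symmetric])
    moreover have "?n 1 = ?A m div 2 - K 1"
      using j by (simp add: cyclic_witness_def twisted_sum_def)
    ultimately show ?thesis
      using True assms(3) by (simp add: cyc_prev_def)
  next
    case False
    then obtain i where i: "j = Suc i" "1 \<le> i" "i < m"
      using j by (intro that[of "j - 1"]) auto
    have "?s j * ?s j = 1"
      using prefix_prod_sign[OF assms(1), of j] j by auto
    moreover have "?A j = ?A i + ?s j * K j"
      using i by (simp add: twisted_sum_def)
    ultimately have "?n j - eps i * ?n i = - K j"
      using i by (simp add: cyclic_witness_def prefix_prod_Suc algebra_simps)
    then show ?thesis using i by (simp add: cyc_prev_def)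
  qed
qed

lemma sol_set_subsingleton:
  assumes "(\<Prod>j=1..m. eps j) \<noteq> 1"
  shows "sol_set M m lam eps k = {} \<or> (\<exists>n. sol_set M m lam eps k = {n})"
proof -
  have "a = b" if "a \<in> sol_set M m lam eps k" "b \<in> sol_set M m lam eps k" for a b
  proof
    fix j
    from that have "cyclic_recurrence m eps (block_sum lam k) a"
      and "cyclic_recurrence m eps (block_sum lam k) b"
      and "j \<notin> {1..m} \<Longrightarrow> a j = 0" "j \<notin> {1..m} \<Longrightarrow> b j = 0"
      by (simp_all add: mem_sol_set_iff)
    then show "a j = b j"
      using cyclic_recurrence_unique[where eps = eps and m = m] assms
      by (cases "j \<in> {1..m}") auto
  qed
  then show ?thesis by blast
qed

lemma sol_set_empty_if_odd:
  assumes "\<forall>j\<in>{1..m}. odd (eps j)" and "odd (\<Sum>l=1..block_end lam m. k l)"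
  shows "sol_set M m lam eps k = {}"
proof -
  have "even (\<Sum>l=1..block_end lam m. k l)" if "n \<in> sol_set M m lam eps k" for n
    using that cyclic_recurrence_sum_even[OF assms(1), of "block_sum lam k" n] sum_block_sum[of lam k m]
    by (simp add: mem_sol_set_iff)
  then show ?thesis using assms(2) by blast
qed

lemma cyclic_witness_mem_sol_set:
  assumes "\<forall>j\<in>{1..m}. eps j = 1 \<or> eps j = -1" and "(\<Prod>j=1..m. eps j) = -1"
    and "even (\<Sum>l=1..block_end lam m. k l)" and "(\<Sum>l=1..block_end lam m. \<bar>k l\<bar>) \<le> 2 * M"
  shows "cyclic_witness m eps (block_sum lam k) \<in> sol_set M m lam eps k"
proof -
  have even: "even (twisted_sum eps (block_sum lam k) m)"
    using assms(3) even_twisted_sum_iff[OF assms(1)] sum_block_sum[of lam k m] by simp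
  have "2 * \<bar>cyclic_witness m eps (block_sum lam k) j\<bar> \<le> 2 * M" for j
    using cyclic_witness_bound[OF assms(1) even, of j] sum_abs_block_sum_le[of lam k m] assms(4)
    by linarith
  moreover have "cyclic_witness m eps (block_sum lam k) j = 0" if "j \<notin> {1..m}" for j
    using that by (auto simp: cyclic_witness_def)
  ultimately show ?thesis
    using cyclic_witness_solves[OF assms(1,2) even] by (simp add: mem_sol_set_iff)
qed

theorem lemma4:
  fixes M :: int and ell m :: nat and lam :: "nat \<Rightarrow> nat"
    and eps :: "nat \<Rightarrow> int" and k :: "nat \<Rightarrow> int"
  assumes "M \<ge> 1" and "ell \<ge> 1" and "1 \<le> m" and "m \<le> ell"
    and "\<forall>j\<in>{1..m}. lam j > 0"
    and "(\<Sum>j=1..m. lam j) = ell"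
    and "\<forall>j\<in>{1..m}. eps j = 1 \<or> eps j = -1"
    and "(\<Prod>j=1..m. eps j) = -1"
  shows "card (sol_set M m lam eps k) \<in> {0, 1} \<and>
         (odd (\<Sum>l=1..ell. k l) \<longrightarrow> card (sol_set M m lam eps k) = 0) \<and>
         (even (\<Sum>l=1..ell. k l) \<and> (\<Sum>l=1..ell. \<bar>k l\<bar>) \<le> 2 * M
            \<longrightarrow> card (sol_set M m lam eps k) = 1)"
proof -
  let ?S = "sol_set M m lam eps k"
  have ell: "block_end lam m = ell" using assms(6) by (simp add: block_end_def)
  have odd_eps: "\<forall>j\<in>{1..m}. odd (eps j)" using assms(7) by auto
  have "?S = {} \<or> (\<exists>n. ?S = {n})"
    using sol_set_subsingleton assms(8) by simp
  moreover have "?S = {}" if "odd (\<Sum>l=1..ell. k l)"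
    using sol_set_empty_if_odd[OF odd_eps] that by (simp add: ell)
  moreover have "?S \<noteq> {}" if "even (\<Sum>l=1..ell. k l)" and "(\<Sum>l=1..ell. \<bar>k l\<bar>) \<le> 2 * M"
    using cyclic_witness_mem_sol_set[OF assms(7,8), where lam = lam and k = k and M = M] that
    by (auto simp: ell)
  ultimately show ?thesis by fastforce
qed

end
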